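(* Let $\bar s$ be a positive half-integer and let $\mathcal D,\mathcal D'$ be even nonnegative integers. Let $\mathcal H^{RSOS}(\mathcal D;\mathcal D';\bar s)$ be the set of integer sequences $(a_0,a_1,\dots,a_{\mathcal D};b_0,b_1,\dots,b_{\mathcal D'})$ such that (i) $0\le a_i\le 2\bar s$ for all $i$ and $0\le b_j\le 2\bar s$ for all $j$; (ii) $\frac{a_{i+1}-a_i+2\bar s-1}{2}\in\{0,1,\dots,2\bar s-1\}$ for $0\le i\le\mathcal D-1$, and $\frac{b_{j+1}-b_j+1}{2}\in\{0,1\}$ for $0\le j\le \mathcal D'-1$; (iii) $2\bar s-2\le a_i+a_{i+1}\le 2\bar s+2$ for $0\le i\le \mathcal D-1$; (iv) $a_0=0$, $a_{\mathcal D}=b_0$ and $b_{\mathcal D'}=0$. Then the number of elements of $\mathcal H^{RSOS}(\mathcal D;\mathcal D';\bar s)$ equals $$\frac{2^{\mathcal D+\mathcal D'}}{\bar s+1}\sum_{q=1}^{2\bar s+1}\sin^2\!\Big(\frac{q\pi}{2\bar s+2}\Big)\cos^{\mathcal D+\mathcal D'}\!\Big(\frac{q\pi}{2\bar s+2}\Big),$$ with the convention $0^0=1$.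
   Context: This set describes paths of a generalized RSOS model with restriction parameter $2\bar s+2$ (heights $0,\dots,2\bar s$), whose first $\mathcal D$ steps have jump $2\bar s-1$ and last $\mathcal D'$ steps have jump $1$. *)

theory Defs
  imports Complex_Main
begin

text \<open>The half-integer \<open>s\<close> is encoded by \<open>m = 2 s\<close> (a positive natural number).\<close>

definition H_RSOS :: "nat \<Rightarrow> nat \<Rightarrow> nat \<Rightarrow> (int list \<times> int list) set" where
  "H_RSOS D D' m = {(a, b).
      length a = D + 1 \<and> length b = D' + 1 \<and>
      (\<forall>i\<le>D. 0 \<le> a ! i \<and> a ! i \<le> int m) \<and>
      (\<forall>j\<le>D'. 0 \<le> b ! j \<and> b ! j \<le> int m) \<and>
      (\<forall>i<D. \<exists>k\<in>{0..int m - 1}. a ! (i+1) - a ! i + int m - 1 = 2 * k) \<and>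
      (\<forall>j<D'. \<exists>k\<in>{0..1::int}. b ! (j+1) - b ! j + 1 = 2 * k) \<and>
      (\<forall>i<D. int m - 2 \<le> a ! i + a ! (i+1) \<and> a ! i + a ! (i+1) \<le> int m + 2) \<and>
      a ! 0 = 0 \<and> a ! D = b ! 0 \<and> b ! D' = 0}"

end

theory Submission
  imports Defs
begin

text \<open>Within the bounds \<open>0 \<le> a \<le> 2s\<close>, the conditions on a step of the first segment say exactly
  \<open>a\<^sub>i\<^sub>+\<^sub>1 = 2s - a\<^sub>i \<plusminus> 1\<close>, and those of the second segment say \<open>b\<^sub>j\<^sub>+\<^sub>1 = b\<^sub>j \<plusminus> 1\<close>. Reflecting
  \<open>a \<mapsto> 2s - a\<close> at every odd index turns the first segment into a \<open>\<plusminus>1\<close> walk with the same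
  endpoints, since \<open>D\<close> is even. Hence the set counts closed \<open>\<plusminus>1\<close> walks of length \<open>D + D'\<close> from \<open>0\<close> on
  the path graph \<open>0, \<dots>, 2s\<close>, and these are counted by the spectral decomposition of its adjacency
  matrix: the eigenvectors are \<open>x \<mapsto> sin ((x + 1) q\<pi> / (2s + 2))\<close>, \<open>1 \<le> q \<le> 2s + 1\<close>, with
  eigenvalues \<open>2 cos (q\<pi> / (2s + 2))\<close>.\<close>

section \<open>Walks in a finite directed graph\<close>

definition walks :: "'a set \<Rightarrow> ('a \<Rightarrow> 'a \<Rightarrow> bool) \<Rightarrow> nat \<Rightarrow> 'a \<Rightarrow> 'a \<Rightarrow> 'a list set" where
  "walks V S N x y = {l. length l = Suc N \<and> l ! 0 = x \<and> l ! N = y \<and> set l \<subseteq> V \<and>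
      (\<forall>i<N. S (l ! i) (l ! Suc i))}"

fun walk_count :: "'a set \<Rightarrow> ('a \<Rightarrow> 'a \<Rightarrow> bool) \<Rightarrow> nat \<Rightarrow> 'a \<Rightarrow> 'a \<Rightarrow> nat" where
  "walk_count V S 0 x y = (if x = y then 1 else 0)"
| "walk_count V S (Suc N) x y =
     (if y \<in> V then (\<Sum>z\<in>{z\<in>V. S z y}. walk_count V S N x z) else 0)"

lemma finite_walks:
  assumes "finite V"
  shows "finite (walks V S N x y)"
proof (rule finite_subset)
  show "walks V S N x y \<subseteq> {l. set l \<subseteq> V \<and> length l = Suc N}"
    by (auto simp: walks_def)
  show "finite {l. set l \<subseteq> V \<and> length l = Suc N}"
    using assms by (rule finite_lists_length_eq)
qed

lemma walks_Suc:
  assumes "y \<in> V"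
  shows "walks V S (Suc N) x y = (\<Union>z\<in>{z\<in>V. S z y}. (\<lambda>l. l @ [y]) ` walks V S N x z)"
proof (intro set_eqI iffI)
  fix l assume l: "l \<in> walks V S (Suc N) x y"
  then have "l = take (Suc N) l @ [y]"
    using take_Suc_conv_app_nth[of "Suc N" l] by (simp add: walks_def)
  moreover have "take (Suc N) l \<in> walks V S N x (l ! N)"
    using l by (auto simp: walks_def nth_take dest: in_set_takeD)
  moreover have "l ! N \<in> {z\<in>V. S z y}"
    using l by (auto simp: walks_def)
  ultimately show "l \<in> (\<Union>z\<in>{z\<in>V. S z y}. (\<lambda>l. l @ [y]) ` walks V S N x z)"
    by blast
next
  fix l assume "l \<in> (\<Union>z\<in>{z\<in>V. S z y}. (\<lambda>l. l @ [y]) ` walks V S N x z)"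
  then obtain z l' where "z \<in> V" "S z y" "l' \<in> walks V S N x z" "l = l' @ [y]"
    by blast
  with assms show "l \<in> walks V S (Suc N) x y"
    by (auto simp: walks_def nth_append less_Suc_eq)
qed

lemma walks_outside: "y \<notin> V \<Longrightarrow> walks V S N x y = {}"
  by (force simp: walks_def dest: nth_mem)

lemma walk_count_outside:
  "x \<in> V \<Longrightarrow> y \<notin> V \<Longrightarrow> walk_count V S N x y = 0"
  by (cases N) auto

lemma card_walks:
  assumes "finite V" "x \<in> V"
  shows "card (walks V S N x y) = walk_count V S N x y"
proof (induction N arbitrary: y)
  case 0
  have "walks V S 0 x y = (if x = y then {[x]} else {})"
    using assms by (auto simp: walks_def length_Suc_conv)
  then show ?case by simp
next
  case (Suc N)
  show ?case
  proof (cases "y \<in> V")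
    case True
    have "card (walks V S (Suc N) x y) =
        (\<Sum>z\<in>{z\<in>V. S z y}. card ((\<lambda>l. l @ [y]) ` walks V S N x z))"
      unfolding walks_Suc[OF True]
      using assms by (intro card_UN_disjoint ballI finite_imageI finite_walks) (auto simp: walks_def)
    also have "\<dots> = (\<Sum>z\<in>{z\<in>V. S z y}. walk_count V S N x z)"
      by (intro sum.cong) (auto simp: card_image inj_on_def Suc.IH)
    finally show ?thesis using True by simp
  next
    case False
    then show ?thesis
      using assms by (simp add: walks_outside walk_count_outside)
  qed
qed

lemma walk_count_add:
  assumes "finite V" "x \<in> V" "y \<in> V"
  shows "(\<Sum>c\<in>V. walk_count V S N x c * walk_count V S M c y) = walk_count V S (N + M) x y"
  using assms(3)
proof (induction M arbitrary: y)
  case 0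
  then show ?case by (simp add: assms(1) if_distrib[of "(*) _"] sum.delta' cong: if_cong)
next
  case (Suc M)
  have "(\<Sum>c\<in>V. walk_count V S N x c * walk_count V S (Suc M) c y)
      = (\<Sum>c\<in>V. \<Sum>z\<in>{z\<in>V. S z y}. walk_count V S N x c * walk_count V S M c z)"
    using Suc.prems by (simp add: sum_distrib_left)
  also have "\<dots> = (\<Sum>z\<in>{z\<in>V. S z y}. \<Sum>c\<in>V. walk_count V S N x c * walk_count V S M c z)"
    by (rule sum.swap)
  also have "\<dots> = (\<Sum>z\<in>{z\<in>V. S z y}. walk_count V S (N + M) x z)"
    by (intro sum.cong) (auto simp: Suc.IH)
  finally show ?case
    using Suc.prems by simp
qed

lemma predecessors_eq_involution_image:
  assumes \<sigma>: "\<And>z. z \<in> V \<Longrightarrow> \<sigma> z \<in> V" "\<And>z. z \<in> V \<Longrightarrow> \<sigma> (\<sigma> z) = z"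
    and S: "\<And>a. a \<in> V \<Longrightarrow> S a y \<longleftrightarrow> T (\<sigma> a) y'"
  shows "{z\<in>V. S z y} = \<sigma> ` {z\<in>V. T z y'}"
proof (intro set_eqI iffI)
  fix z assume "z \<in> {z\<in>V. S z y}"
  then have "\<sigma> z \<in> {z\<in>V. T z y'}" and "z = \<sigma> (\<sigma> z)"
    using \<sigma> S by auto
  then show "z \<in> \<sigma> ` {z\<in>V. T z y'}" by blast
qed (use \<sigma> S in auto)

lemma walk_count_involution:
  assumes \<sigma>: "\<And>z. z \<in> V \<Longrightarrow> \<sigma> z \<in> V" "\<And>z. z \<in> V \<Longrightarrow> \<sigma> (\<sigma> z) = z"
    and T: "\<And>a b. a \<in> V \<Longrightarrow> b \<in> V \<Longrightarrow> T (\<sigma> a) (\<sigma> b) \<longleftrightarrow> T a b"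
    and "x \<in> V" "y \<in> V"
  shows "walk_count V T N (\<sigma> x) (\<sigma> y) = walk_count V T N x y"
  using \<open>y \<in> V\<close>
proof (induction N arbitrary: y)
  case 0
  have "\<sigma> x = \<sigma> y \<longleftrightarrow> x = y"
    using \<sigma>(2) \<open>x \<in> V\<close> 0 by metis
  then show ?case by simp
next
  case (Suc N)
  have inj: "inj_on \<sigma> {z\<in>V. T z y}"
    using \<sigma>(2) by (auto intro: inj_on_inverseI)
  have "T a (\<sigma> y) \<longleftrightarrow> T (\<sigma> a) y" if "a \<in> V" for a
    using T[of "\<sigma> a" y] \<sigma> that Suc.prems by simp
  then have "{z\<in>V. T z (\<sigma> y)} = \<sigma> ` {z\<in>V. T z y}"
    using \<sigma> by (intro predecessors_eq_involution_image)
  then have "walk_count V T (Suc N) (\<sigma> x) (\<sigma> y) =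
      (\<Sum>z\<in>{z\<in>V. T z y}. walk_count V T N (\<sigma> x) (\<sigma> z))"
    using Suc.prems \<sigma> by (simp add: sum.reindex[OF inj])
  also have "\<dots> = walk_count V T (Suc N) x y"
    using Suc by simp
  finally show ?case .
qed

text \<open>Applying \<open>\<sigma>\<close> to every other vertex turns an \<open>S\<close>-walk into a \<open>T\<close>-walk.\<close>

lemma walk_count_twisted:
  assumes \<sigma>: "\<And>z. z \<in> V \<Longrightarrow> \<sigma> z \<in> V" "\<And>z. z \<in> V \<Longrightarrow> \<sigma> (\<sigma> z) = z"
    and T: "\<And>a b. a \<in> V \<Longrightarrow> b \<in> V \<Longrightarrow> T (\<sigma> a) (\<sigma> b) \<longleftrightarrow> T a b"
    and S: "\<And>a b. a \<in> V \<Longrightarrow> b \<in> V \<Longrightarrow> S a b \<longleftrightarrow> T (\<sigma> a) b"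
    and "x \<in> V"
  shows "walk_count V S N x y = walk_count V T N (if even N then x else \<sigma> x) y"
proof (induction N arbitrary: y)
  case 0
  show ?case by simp
next
  case (Suc N)
  define w where "w = (if even N then x else \<sigma> x)"
  have w: "w \<in> V" "(if even (Suc N) then x else \<sigma> x) = \<sigma> w"
    using \<sigma> \<open>x \<in> V\<close> by (auto simp: w_def)
  show ?case
  proof (cases "y \<in> V")
    case True
    have inj: "inj_on \<sigma> {z\<in>V. T z y}"
      using \<sigma>(2) by (auto intro: inj_on_inverseI)
    have "{z\<in>V. S z y} = \<sigma> ` {z\<in>V. T z y}"
      using True \<sigma> S by (intro predecessors_eq_involution_image) auto
    then have "walk_count V S (Suc N) x y = (\<Sum>z\<in>{z\<in>V. T z y}. walk_count V T N w (\<sigma> z))"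
      using True by (simp add: sum.reindex[OF inj] Suc.IH w_def)
    also have "\<dots> = (\<Sum>z\<in>{z\<in>V. T z y}. walk_count V T N (\<sigma> w) z)"
    proof (intro sum.cong refl)
      fix z assume "z \<in> {z\<in>V. T z y}"
      then show "walk_count V T N w (\<sigma> z) = walk_count V T N (\<sigma> w) z"
        using walk_count_involution[where V = V and \<sigma> = \<sigma> and T = T, OF \<sigma> T, of "\<sigma> w" z N]
          w \<sigma> by simp
    qed
    finally show ?thesis
      using True w by simp
  next
    case False
    then show ?thesis using w \<sigma> \<open>x \<in> V\<close> by (simp add: walk_count_outside)
  qed
qed

section \<open>The RSOS paths as pairs of walks\<close>

definition unit_step :: "int \<Rightarrow> int \<Rightarrow> bool" where
  "unit_step a b \<longleftrightarrow> \<bar>b - a\<bar> = 1"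

lemma rsos_b_step_iff: "(\<exists>k\<in>{0..1::int}. b - a + 1 = 2 * k) \<longleftrightarrow> unit_step a b"
proof -
  have "k \<in> {0..1} \<longleftrightarrow> k = 0 \<or> k = 1" for k :: int
    by auto
  then show ?thesis
    unfolding Bex_def unit_step_def
    by (auto simp: conj_disj_distribR ex_disj_distrib abs_eq_iff)
qed

lemma rsos_a_step_iff:
  assumes "0 \<le> a" "a \<le> int m" "0 \<le> a'" "a' \<le> int m"
  shows "((\<exists>k\<in>{0..int m - 1}. a' - a + int m - 1 = 2 * k) \<and>
      int m - 2 \<le> a + a' \<and> a + a' \<le> int m + 2) \<longleftrightarrow> unit_step (int m - a) a'"
proof
  assume "unit_step (int m - a) a'"
  then consider "a' = int m - a - 1" | "a' = int m - a + 1"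
    unfolding unit_step_def by linarith
  then show "(\<exists>k\<in>{0..int m - 1}. a' - a + int m - 1 = 2 * k) \<and>
      int m - 2 \<le> a + a' \<and> a + a' \<le> int m + 2"
    by cases (use assms in \<open>auto intro: bexI[of _ "int m - a - 1"] bexI[of _ "int m - a"]\<close>)
qed (auto simp: unit_step_def, presburger)

lemma H_RSOS_eq_walk_pairs:
  "H_RSOS D D' m = (\<Union>c\<in>{0..int m}.
      walks {0..int m} (\<lambda>a. unit_step (int m - a)) D 0 c \<times> walks {0..int m} unit_step D' c 0)"
proof -
  have bounds: "(\<forall>i\<le>N. 0 \<le> l ! i \<and> l ! i \<le> int m) \<longleftrightarrow> set l \<subseteq> {0..int m}"
    if "length l = Suc N" for l :: "int list" and N
    using that by (auto simp: set_conv_nth less_Suc_eq_le)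
  have nth_bounds: "0 \<le> l ! i \<and> l ! i \<le> int m"
    if "length l = Suc N" "set l \<subseteq> {0..int m}" "i \<le> N" for l :: "int list" and N i
    using nth_mem[of i l] that by (force simp: less_Suc_eq_le)
  have a_step: "((\<exists>k\<in>{0..int m - 1}. a ! Suc i - a ! i + int m - 1 = 2 * k) \<and>
      int m - 2 \<le> a ! i + a ! Suc i \<and> a ! i + a ! Suc i \<le> int m + 2) \<longleftrightarrow>
      unit_step (int m - a ! i) (a ! Suc i)"
    if "length a = Suc D" "set a \<subseteq> {0..int m}" "i < D" for a i
    using nth_bounds[OF that(1,2), of i] nth_bounds[OF that(1,2), of "Suc i"] that(3)
    by (intro rsos_a_step_iff) auto
  show ?thesis
    unfolding H_RSOS_def walks_def rsos_b_step_iff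
    by (auto simp: bounds cong: conj_cong) (use a_step nth_bounds in blast)+
qed

lemma card_H_RSOS:
  "card (H_RSOS D D' m) = (\<Sum>c\<in>{0..int m}.
      walk_count {0..int m} (\<lambda>a. unit_step (int m - a)) D 0 c * walk_count {0..int m} unit_step D' c 0)"
proof -
  have "card (H_RSOS D D' m) = (\<Sum>c\<in>{0..int m}.
      card (walks {0..int m} (\<lambda>a. unit_step (int m - a)) D 0 c \<times> walks {0..int m} unit_step D' c 0))"
    unfolding H_RSOS_eq_walk_pairs
    by (intro card_UN_disjoint ballI finite_cartesian_product finite_walks) (auto simp: walks_def)
  then show ?thesis
    by (simp add: card_cartesian_product card_walks)
qed

section \<open>Walks on a path graph\<close>

lemma sum_cos_multiples:
  fixes n k :: nat
  assumes "k < 2 * n"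
  shows "(\<Sum>q=1..n-1. cos (real k * (real q * pi / real n))) =
    (if k = 0 then real n - 1 else if even k then -1 else 0)"
proof (cases "k = 0")
  case True
  with assms show ?thesis by simp
next
  case False
  define x where "x = real k * pi / (2 * real n)"
  have "0 < x" "x < pi"
    using False assms by (auto simp: x_def field_simps)
  then have "sin x > 0" by (rule sin_gt_zero)
  define f where "f i = sin ((2 * real i - 1) * x)" for i :: nat
  have telescoping_step: "f (Suc q) - f q = 2 * sin x * cos (real k * (real q * pi / real n))" for q
  proof -
    have "f (Suc q) - f q = 2 * sin x * cos (2 * real q * x)"
      unfolding f_def sin_diff_sin by (simp add: algebra_simps)
    also have "2 * real q * x = real k * (real q * pi / real n)"
      by (simp add: x_def)
    finally show ?thesis .
  qed
  have "2 * sin x * (\<Sum>q=1..n-1. cos (real k * (real q * pi / real n))) =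
      (\<Sum>q=1..n-1. f (Suc q) - f q)"
    by (simp add: telescoping_step sum_distrib_left)
  also have "\<dots> = f n - f 1"
    using assms by (subst sum_Suc_diff) auto
  also have "f n = sin (real k * pi - x)"
    using assms unfolding f_def x_def by (simp add: field_simps)
  also have "\<dots> = - ((-1) ^ k * sin x)"
    by (simp add: sin_diff)
  finally have "2 * sin x * (\<Sum>q=1..n-1. cos (real k * (real q * pi / real n))) =
      - ((-1) ^ k + 1) * sin x"
    by (simp add: f_def algebra_simps)
  with \<open>sin x > 0\<close> False show ?thesis
    by (auto simp: mult.commute[of 2])
qed

lemma sum_sin_mult_sin_orthogonal:
  fixes n i k :: nat
  assumes "0 < i" "i < n" "0 < k" "k < n"
  shows "(\<Sum>q=1..n-1. sin (real i * (real q * pi / real n)) * sin (real k * (real q * pi / real n))) =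
    (if i = k then real n / 2 else 0)"
proof -
  define d where "d = nat \<bar>int i - int k\<bar>"
  have d: "real d = \<bar>real i - real k\<bar>" "d < 2 * n" "d = 0 \<longleftrightarrow> i = k" "even d \<longleftrightarrow> even (i + k)"
    using assms by (auto simp: d_def even_nat_iff)
  have product: "sin (real i * t) * sin (real k * t) = (cos (real d * t) - cos (real (i + k) * t)) / 2"
    if "t \<ge> 0" for t
  proof -
    have "cos ((real i - real k) * t) = cos (real d * t)"
      using that by (metis abs_mult abs_of_nonneg cos_abs_real d(1))
    then show ?thesis
      by (simp add: sin_times_sin algebra_simps)
  qed
  have "(\<Sum>q=1..n-1. sin (real i * (real q * pi / real n)) * sin (real k * (real q * pi / real n))) =
      (\<Sum>q=1..n-1. (cos (real d * (real q * pi / real n)) -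
        cos (real (i + k) * (real q * pi / real n))) / 2)"
    by (intro sum.cong refl product) simp
  also have "\<dots> = ((\<Sum>q=1..n-1. cos (real d * (real q * pi / real n))) -
       (\<Sum>q=1..n-1. cos (real (i + k) * (real q * pi / real n)))) / 2"
    by (simp add: sum_subtractf flip: sum_divide_distrib)
  also have "\<dots> = ((if d = 0 then real n - 1 else if even d then -1 else 0) -
      (if even (i + k) then -1 else 0)) / 2"
    using assms by (simp only: sum_cos_multiples d(2)) simp
  also have "\<dots> = (if i = k then real n / 2 else 0)"
    using d by auto
  finally show ?thesis .
qed

text \<open>The functions \<open>x \<mapsto> sin ((x + 1) q\<pi> / (m + 2))\<close> are the eigenvectors of the adjacency matrix
  of the path \<open>0, \<dots>, m\<close>, extended by zero to \<open>-1\<close> and \<open>m + 1\<close>.\<close>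

definition path_walk_number :: "nat \<Rightarrow> nat \<Rightarrow> int \<Rightarrow> int \<Rightarrow> real" where
  "path_walk_number m N x y = 2 / (real m + 2) *
    (\<Sum>q=1..m+1. sin (of_int (x + 1) * (real q * pi / (real m + 2))) *
      sin (of_int (y + 1) * (real q * pi / (real m + 2))) * (2 * cos (real q * pi / (real m + 2))) ^ N)"

lemma path_walk_number_below: "path_walk_number m N x (-1) = 0"
  by (simp add: path_walk_number_def)

lemma path_walk_number_above: "path_walk_number m N x (int m + 1) = 0"
proof -
  have "of_int (int m + 1 + 1) * (real q * pi / (real m + 2)) = real q * pi" for q
    by (simp add: field_simps)
  then show ?thesis
    by (simp add: path_walk_number_def)
qed

lemma path_walk_number_Suc:
  "path_walk_number m (Suc N) x y = path_walk_number m N x (y - 1) + path_walk_number m N x (y + 1)"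
proof -
  have step: "a * sin (of_int (y + 1) * t) * (2 * cos t) ^ Suc N =
      a * sin (of_int (y - 1 + 1) * t) * (2 * cos t) ^ N + a * sin (of_int (y + 1 + 1) * t) * (2 * cos t) ^ N"
    for a t :: real
  proof -
    have "of_int (y - 1 + 1) * t = of_int (y + 1) * t - t" "of_int (y + 1 + 1) * t = of_int (y + 1) * t + t"
      by (simp_all add: algebra_simps)
    then have "sin (of_int (y - 1 + 1) * t) + sin (of_int (y + 1 + 1) * t) =
        2 * sin (of_int (y + 1) * t) * cos t"
      by (simp add: sin_add sin_diff)
    then show ?thesis
      by (simp add: algebra_simps flip: distrib_left)
  qed
  show ?thesis
    unfolding path_walk_number_def step by (simp add: sum.distrib distrib_left)
qed

lemma path_walk_number_0:
  assumes "x \<in> {0..int m}" "y \<in> {0..int m}"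
  shows "path_walk_number m 0 x y = (if x = y then 1 else 0)"
proof -
  have nat_conv: "of_int (x + 1) = real (nat (x + 1))" "of_int (y + 1) = real (nat (y + 1))"
    "real m + 2 = real (m + 2)" "m + 1 = m + 2 - 1"
    using assms by simp_all
  have "(\<Sum>q=1..m+2-1. sin (real (nat (x + 1)) * (real q * pi / real (m + 2))) *
      sin (real (nat (y + 1)) * (real q * pi / real (m + 2)))) =
      (if x = y then real (m + 2) / 2 else 0)"
    using assms by (subst sum_sin_mult_sin_orthogonal) auto
  then show ?thesis
    unfolding path_walk_number_def nat_conv by simp
qed

lemma walk_count_unit_step_Suc:
  assumes "x \<in> V" "y \<in> V"
  shows "walk_count V unit_step (Suc N) x y =
    walk_count V unit_step N x (y - 1) + walk_count V unit_step N x (y + 1)"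
proof -
  have "{z\<in>V. unit_step z y} = {y - 1, y + 1} \<inter> V"
    by (auto simp: unit_step_def)
  moreover have "(\<Sum>z\<in>{y - 1, y + 1} \<inter> V. walk_count V unit_step N x z) =
      (\<Sum>z\<in>{y - 1, y + 1}. walk_count V unit_step N x z)"
    using assms(1) by (intro sum.mono_neutral_left) (auto intro!: walk_count_outside)
  ultimately show ?thesis
    using assms(2) by simp
qed

lemma walk_count_path_graph:
  assumes "x \<in> {0..int m}" "y \<in> {-1..int m + 1}"
  shows "real (walk_count {0..int m} unit_step N x y) = path_walk_number m N x y"
  using assms(2)
proof (induction N arbitrary: y)
  case 0
  then consider "y = -1" | "y = int m + 1" | "y \<in> {0..int m}"
    by fastforce
  then show ?case
    using assms(1) by cases (auto simp: path_walk_number_below path_walk_number_above path_walk_number_0)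
next
  case (Suc N)
  then consider "y = -1" | "y = int m + 1" | "y \<in> {0..int m}"
    by fastforce
  then show ?case
  proof cases
    case 3
    have "real (walk_count {0..int m} unit_step (Suc N) x y) =
        real (walk_count {0..int m} unit_step N x (y - 1)) +
        real (walk_count {0..int m} unit_step N x (y + 1))"
      unfolding walk_count_unit_step_Suc[OF assms(1) 3] by simp
    also have "\<dots> = path_walk_number m (Suc N) x y"
      using Suc.IH 3 by (simp add: path_walk_number_Suc)
    finally show ?thesis .
  qed (use assms(1) in \<open>auto simp: path_walk_number_below path_walk_number_above\<close>)
qed

theorem proposition6p1:
  fixes m D D' :: nat
  assumes "m \<ge> 1" and "even D" and "even D'"
  shows "real (card (H_RSOS D D' m)) =
    2 ^ (D + D') / (real m / 2 + 1) *
    (\<Sum>q=1..m+1. (sin (real q * pi / (real m + 2)))\<^sup>2 *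
                  (cos (real q * pi / (real m + 2))) ^ (D + D'))"
proof -
  let ?V = "{0..int m}"
  have reflection: "walk_count ?V (\<lambda>a. unit_step (int m - a)) D 0 c = walk_count ?V unit_step D 0 c" for c
    using walk_count_twisted[of ?V "\<lambda>z. int m - z" unit_step "\<lambda>a. unit_step (int m - a)" 0 D c] \<open>even D\<close>
    by (simp add: unit_step_def abs_minus_commute)
  have "card (H_RSOS D D' m) = walk_count ?V unit_step (D + D') 0 0"
    unfolding card_H_RSOS reflection by (simp add: walk_count_add)
  then have "real (card (H_RSOS D D' m)) = path_walk_number m (D + D') 0 0"
    by (simp add: walk_count_path_graph)
  also have "\<dots> = 2 ^ (D + D') / (real m / 2 + 1) *
    (\<Sum>q=1..m+1. (sin (real q * pi / (real m + 2)))\<^sup>2 * (cos (real q * pi / (real m + 2))) ^ (D + D'))"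
    by (simp add: path_walk_number_def power_mult_distrib power2_eq_square sum_distrib_left field_simps)
  finally show ?thesis .
qed

end
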